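(* Let $r\in(1,2)$. Let $Z$ be a random variable with values in $\mathbb{N}$ and $X$ a nonnegative real random variable with $\mathbb{E}[X^r]+\mathbb{E}[Z^r]<+\infty$. Write $L_Z(\xi)=\mathbb{E}[e^{-\xi Z}]$ and $k_X(\xi)=\log\mathbb{E}[e^{-\xi X}]$. Then there is a positive constant $C=C(X)$, depending only on $X$ (and $r$), such that for all $\xi>0$ $$|L_Z(-k_X(\xi))-L_Z(\xi\mathbb{E}[X])|\,\xi^{-r}\le C(X)\big[1+\mathbb{E}[Z^r]\big].$$ *)

theory Defs
  imports "HOL-Probability.Probability"
begin

definition L_Z :: "nat pmf \<Rightarrow> real \<Rightarrow> real" where
  "L_Z p s = (\<integral>n. exp (- s * real n) \<partial>measure_pmf p)"

definition k_X :: "'a measure \<Rightarrow> ('a \<Rightarrow> real) \<Rightarrow> real \<Rightarrow> real" where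
  "k_X M X xi = ln (\<integral>x. exp (- xi * X x) \<partial>M)"

end

theory Submission imports Defs begin

text \<open>Write \<open>E = \<integral> exp (-\<xi> X)\<close>, \<open>m = \<integral> X\<close> and \<open>a = -k_X(\<xi>) = -ln E\<close>. Jensen's inequality for the
  convex function \<open>exp (-\<cdot>)\<close> gives \<open>E \<ge> exp (-\<xi> m)\<close>, i.e. \<open>a \<le> \<xi> m\<close>; the pointwise bound
  \<open>exp (-t) \<le> 1 - t + t\<^sup>r\<close> gives \<open>E \<le> 1 - \<xi> m + \<xi>\<^sup>r \<integral> X\<^sup>r\<close>, and with \<open>ln E \<le> E - 1\<close> this yields
  \<open>0 \<le> \<xi> m - a \<le> \<xi>\<^sup>r \<integral> X\<^sup>r\<close>. On \<open>[0,\<infinity>)\<close> the Laplace transform \<open>L_Z\<close> is Lipschitz with constant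
  \<open>\<integral> Z \<le> 1 + \<integral> Z\<^sup>r\<close>, so the claim holds with \<open>C = 1 + \<integral> X\<^sup>r\<close>.\<close>

lemma exp_minus_le_one_minus_plus_square:
  assumes "(t::real) \<ge> 0" shows "exp (-t) \<le> 1 - t + t\<^sup>2"
proof -
  have "exp (-t) = 1 / exp t" by (simp add: exp_minus field_simps)
  also have "\<dots> \<le> 1 / (1 + t)" using exp_ge_add_one_self[of t] assms
    by (intro divide_left_mono) auto
  also have "\<dots> \<le> 1 - t + t\<^sup>2" using assms
    by (simp add: field_simps power2_eq_square)
  finally show ?thesis .
qed

lemma exp_minus_le_one_minus_plus_powr:
  assumes "(t::real) \<ge> 0" "1 \<le> r" "r \<le> 2" shows "exp (-t) \<le> 1 - t + t powr r"
proof (cases "t \<le> 1")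
  case True
  have "t\<^sup>2 = t powr 2" using assms by (cases "t = 0") (simp_all add: powr_realpow)
  also have "\<dots> \<le> t powr r" using True assms by (intro powr_mono') auto
  finally show ?thesis using exp_minus_le_one_minus_plus_square[OF assms(1)] by linarith
next
  case False
  then have "t powr 1 \<le> t powr r" using assms by (intro powr_mono) auto
  then have "t \<le> t powr r" using False by simp
  moreover have "exp (-t) \<le> 1" using assms(1) by simp
  ultimately show ?thesis using False by linarith
qed

lemma exp_minus_ge_tangent: "exp (-(t::real)) \<ge> exp (-s) * (1 - (t - s))"
proof -
  have "exp (-t) = exp (-s) * exp (s - t)" by (simp add: exp_add[symmetric])
  moreover have "exp (s - t) \<ge> 1 - (t - s)" using exp_ge_add_one_self[of "s - t"] by linarith
  ultimately show ?thesis by (simp add: mult_left_mono)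
qed

lemma le_one_plus_powr:
  assumes "0 \<le> (x::real)" "1 \<le> r" shows "x \<le> 1 + x powr r"
proof (cases "x \<le> 1")
  case True then show ?thesis using powr_ge_zero[of x r] by linarith
next
  case False
  then have "x powr 1 \<le> x powr r" using assms by (intro powr_mono) auto
  then show ?thesis using False by simp
qed

lemma abs_exp_mult_diff_le:
  assumes "0 \<le> (a::real)" "a \<le> b" "0 \<le> n"
  shows "\<bar>exp (-a * n) - exp (-b * n)\<bar> \<le> n * (b - a)"
proof -
  define u where "u = (b - a) * n"
  have u: "u \<ge> 0" using assms unfolding u_def by simp
  have split: "exp (-a * n) - exp (-b * n) = exp (-a * n) * (1 - exp (-u))"
    unfolding u_def by (simp add: exp_add[symmetric] algebra_simps)
  have "exp (-a * n) \<le> 1" using assms by simp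
  moreover have "0 \<le> 1 - exp (-u)" "1 - exp (-u) \<le> u"
    using u exp_ge_add_one_self[of "-u"] by auto
  ultimately have "\<bar>exp (-a * n) * (1 - exp (-u))\<bar> \<le> u"
    by (simp add: abs_mult mult_le_one order_trans[OF mult_left_le_one_le])
  then show ?thesis using split unfolding u_def by (simp add: algebra_simps)
qed

context finite_measure
begin

lemma integrable_of_integrable_powr:
  fixes f :: "'a \<Rightarrow> real"
  assumes "f \<in> borel_measurable M" "AE x in M. 0 \<le> f x" "1 \<le> r"
    and "integrable M (\<lambda>x. f x powr r)"
  shows "integrable M f"
proof (rule Bochner_Integration.integrable_bound)
  show "integrable M (\<lambda>x. 1 + f x powr r)" using assms(4) by simp
  show "AE x in M. norm (f x) \<le> norm (1 + f x powr r)"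
    using assms(2) proof eventually_elim
    case (elim x)
    then show ?case using le_one_plus_powr[of "f x" r] powr_ge_zero[of "f x" r] assms(3) by simp
  qed
qed (rule assms(1))

end

context prob_space
begin

lemma integral_le_one_plus_integral_powr:
  fixes f :: "'a \<Rightarrow> real"
  assumes "f \<in> borel_measurable M" "AE x in M. 0 \<le> f x" "1 \<le> r"
    and "integrable M (\<lambda>x. f x powr r)"
  shows "(\<integral>x. f x \<partial>M) \<le> 1 + (\<integral>x. f x powr r \<partial>M)"
proof -
  have "(\<integral>x. f x \<partial>M) \<le> (\<integral>x. 1 + f x powr r \<partial>M)"
  proof (rule integral_mono_AE)
    show "integrable M f" using integrable_of_integrable_powr assms by blast
    show "integrable M (\<lambda>x. 1 + f x powr r)" using assms(4) by simp
    show "AE x in M. f x \<le> 1 + f x powr r"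
      using assms(2) by eventually_elim (use assms(3) le_one_plus_powr in blast)
  qed
  also have "\<dots> = 1 + (\<integral>x. f x powr r \<partial>M)" using assms(4) by (simp add: prob_space)
  finally show ?thesis .
qed

lemma exp_minus_integral_le_integral_exp_minus:
  fixes f :: "'a \<Rightarrow> real"
  assumes "integrable M f" "integrable M (\<lambda>x. exp (- f x))"
  shows "exp (- (\<integral>x. f x \<partial>M)) \<le> (\<integral>x. exp (- f x) \<partial>M)"
proof -
  define m where "m = (\<integral>x. f x \<partial>M)"
  have "exp (- m) = (\<integral>x. exp (- m) * (1 + m) - exp (- m) * f x \<partial>M)"
    using assms(1) by (simp add: prob_space m_def algebra_simps)
  also have "\<dots> \<le> (\<integral>x. exp (- f x) \<partial>M)"
  proof (rule integral_mono)
    fix x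
    show "exp (- m) * (1 + m) - exp (- m) * f x \<le> exp (- f x)"
      using exp_minus_ge_tangent[where t = "f x" and s = m] by (simp add: algebra_simps)
  qed (use assms in simp_all)
  finally show ?thesis unfolding m_def .
qed

lemma minus_k_X_bounds:
  assumes "X \<in> borel_measurable M" "AE x in M. 0 \<le> X x" "1 \<le> r" "r \<le> 2"
    and "integrable M (\<lambda>x. X x powr r)" and "0 \<le> xi"
  shows "0 \<le> - k_X M X xi" "- k_X M X xi \<le> xi * (\<integral>x. X x \<partial>M)"
    and "xi * (\<integral>x. X x \<partial>M) + k_X M X xi \<le> xi powr r * (\<integral>x. X x powr r \<partial>M)"
proof -
  have intX: "integrable M X" using integrable_of_integrable_powr assms by blast
  define E where "E = (\<integral>x. exp (- xi * X x) \<partial>M)"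
  have bounded: "AE x in M. exp (- xi * X x) \<le> 1"
    using assms(2) by eventually_elim (use assms(6) in simp)
  have intE: "integrable M (\<lambda>x. exp (- xi * X x))"
    using bounded assms(1) by (intro integrable_const_bound[where B=1]) auto
  have "E \<le> (\<integral>x. 1 \<partial>M)" unfolding E_def
    using intE bounded by (intro integral_mono_AE) auto
  then have E_le_1: "E \<le> 1" by (simp add: prob_space)
  have E_ge: "exp (- (xi * (\<integral>x. X x \<partial>M))) \<le> E"
    using exp_minus_integral_le_integral_exp_minus[of "\<lambda>x. xi * X x"] intX intE
    by (simp add: E_def)
  then have E_pos: "0 < E" using exp_gt_zero order_less_le_trans by blast
  have "E \<le> (\<integral>x. 1 - xi * X x + xi powr r * X x powr r \<partial>M)" unfolding E_def
  proof (rule integral_mono_AE)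
    show "integrable M (\<lambda>x. 1 - xi * X x + xi powr r * X x powr r)"
      using intX assms(5) by simp
    show "AE x in M. exp (- xi * X x) \<le> 1 - xi * X x + xi powr r * X x powr r"
      using assms(2) proof eventually_elim
      case (elim x)
      then show ?case
        using exp_minus_le_one_minus_plus_powr[of "xi * X x" r] assms(3,4,6) by (simp add: powr_mult)
    qed
  qed (rule intE)
  also have "\<dots> = 1 - xi * (\<integral>x. X x \<partial>M) + xi powr r * (\<integral>x. X x powr r \<partial>M)"
    using intX assms(5) by (simp add: prob_space)
  finally have E_le: "E \<le> \<dots>" .
  have k: "k_X M X xi = ln E" unfolding k_X_def E_def by simp
  show "0 \<le> - k_X M X xi" using E_pos E_le_1 k by simp
  show "- k_X M X xi \<le> xi * (\<integral>x. X x \<partial>M)"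
    using E_ge E_pos k by (metis ln_exp ln_le_cancel_iff exp_gt_zero minus_le_iff)
  show "xi * (\<integral>x. X x \<partial>M) + k_X M X xi \<le> xi powr r * (\<integral>x. X x powr r \<partial>M)"
    using ln_le_minus_one[OF E_pos] E_le k by linarith
qed

end

lemma L_Z_lipschitz:
  assumes "integrable (measure_pmf p) real" "0 \<le> a" "a \<le> b"
  shows "\<bar>L_Z p a - L_Z p b\<bar> \<le> (\<integral>n. real n \<partial>measure_pmf p) * (b - a)"
proof -
  have int_exp: "integrable (measure_pmf p) (\<lambda>n. exp (- c * real n))" if "c \<ge> 0" for c
    by (rule measure_pmf.integrable_const_bound[where B=1]) (use that in auto)
  have "\<bar>L_Z p a - L_Z p b\<bar> = \<bar>\<integral>n. exp (- a * real n) - exp (- b * real n) \<partial>measure_pmf p\<bar>"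
    unfolding L_Z_def using int_exp assms(2,3) by simp
  also have "\<dots> \<le> (\<integral>n. \<bar>exp (- a * real n) - exp (- b * real n)\<bar> \<partial>measure_pmf p)"
    by (rule integral_abs_bound)
  also have "\<dots> \<le> (\<integral>n. real n * (b - a) \<partial>measure_pmf p)"
    using int_exp assms abs_exp_mult_diff_le by (intro integral_mono) auto
  also have "\<dots> = (\<integral>n. real n \<partial>measure_pmf p) * (b - a)" by simp
  finally show ?thesis .
qed

theorem lemmaA4:
  fixes M :: "'a measure" and X :: "'a \<Rightarrow> real" and r :: real
  assumes "1 < r" and "r < 2"
    and "prob_space M"
    and "X \<in> borel_measurable M"
    and "AE x in M. 0 \<le> X x"
    and "integrable M (\<lambda>x. X x powr r)"
  shows "\<exists>C>0. \<forall>p :: nat pmf.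
           integrable (measure_pmf p) (\<lambda>n. real n powr r) \<longrightarrow>
           (\<forall>xi>0. \<bar>L_Z p (- k_X M X xi) - L_Z p (xi * (\<integral>x. X x \<partial>M))\<bar> * xi powr (- r)
                   \<le> C * (1 + (\<integral>n. real n powr r \<partial>measure_pmf p)))"
proof -
  interpret prob_space M by (rule assms(3))
  define Xr where "Xr = (\<integral>x. X x powr r \<partial>M)"
  have "Xr \<ge> 0" unfolding Xr_def by (intro integral_nonneg_AE) auto
  show ?thesis
  proof (intro exI[of _ "1 + Xr"] conjI allI impI)
    show "1 + Xr > 0" using \<open>Xr \<ge> 0\<close> by simp
    fix p :: "nat pmf" and xi :: real
    assume int_p: "integrable (measure_pmf p) (\<lambda>n. real n powr r)" and "xi > 0"
    define a b where "a = - k_X M X xi" and "b = xi * (\<integral>x. X x \<partial>M)"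
    define I where "I = (\<integral>n. real n powr r \<partial>measure_pmf p)"
    have "I \<ge> 0" unfolding I_def by (intro integral_nonneg_AE) auto
    have a_nonneg: "0 \<le> a" and a_le_b: "a \<le> b" and b_minus_a: "b - a \<le> xi powr r * Xr"
      using minus_k_X_bounds[OF assms(4,5) _ _ assms(6), of xi] assms(1,2) \<open>xi > 0\<close>
      by (simp_all add: a_def b_def Xr_def)
    have "integrable (measure_pmf p) real"
      by (rule measure_pmf.integrable_of_integrable_powr) (use int_p assms(1) in auto)
    then have "\<bar>L_Z p a - L_Z p b\<bar> \<le> (\<integral>n. real n \<partial>measure_pmf p) * (b - a)"
      using L_Z_lipschitz a_nonneg a_le_b by blast
    also have "\<dots> \<le> (1 + I) * (b - a)"
      unfolding I_def using a_le_b
      by (intro mult_right_mono measure_pmf.integral_le_one_plus_integral_powr)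
         (use int_p assms(1) in auto)
    also have "\<dots> \<le> (1 + I) * (xi powr r * Xr)"
      using b_minus_a \<open>I \<ge> 0\<close> by (intro mult_left_mono) auto
    finally have "\<bar>L_Z p a - L_Z p b\<bar> * xi powr (- r) \<le> (1 + I) * (xi powr r * Xr) * xi powr (- r)"
      by (intro mult_right_mono) auto
    also have "\<dots> = (1 + Xr) * (1 + I) - (1 + I)"
      using \<open>xi > 0\<close> by (simp add: powr_minus field_simps)
    finally show "\<bar>L_Z p a - L_Z p b\<bar> * xi powr (- r) \<le> (1 + Xr) * (1 + I)"
      using \<open>I \<ge> 0\<close> by linarith
  qed
qed

end
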